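(* For all contexts $\Gamma,\Delta$ and terms $M,A,B$: if $\Gamma\approx_\alpha\Delta$, $A\sim_\alpha B$ and $\Gamma\vdash M:A$, then $\Delta\vdash M:B$.
   Context: Let $\mathcal V$ (the variables) be a type with decidable equality, equipped with functions $\mathrm{encode}:\mathcal V\to\mathbb N$ and $\mathrm{decode}:\mathbb N\to\mathcal V$ such that $\mathrm{encode}(\mathrm{decode}\,n)=n$ for all $n$. Let $\mathcal C$ (the constants) be any type. Terms $\Lambda$ are generated by: $c\,k$ ($k\in\mathcal C$), $v\,x$ ($x\in\mathcal V$), $\lambda[x:A]M$, $\Pi[x:A]B$ and $M\cdot N$; in $\lambda[x:A]M$ and $\Pi[x:A]B$ the name $x$ binds in $M$ (resp. $B$) but not in $A$. Terms are raw first-order syntax (not identified up to renaming of bound variables) and $\equiv$ denotes syntactic identity. The list of free variables is $\mathrm{fv}(c\,k)=[\,]$, $\mathrm{fv}(v\,x)=[x]$, $\mathrm{fv}(\lambda[x:A]M)=\mathrm{fv}\,A\mathbin{+\!\!+}(\mathrm{fv}\,M-x)$, $\mathrm{fv}(\Pi[x:A]B)=\mathrm{fv}\,A\mathbin{+\!\!+}(\mathrm{fv}\,B-x)$, $\mathrm{fv}(M\cdot N)=\mathrm{fv}\,M\mathbin{+\!\!+}\mathrm{fv}\,N$, where $\mathbin{+\!\!+}$ is list concatenation and $xs-x$ deletes every occurrence of $x$ from $xs$. Fix a function $\chi':\mathrm{List}\,\mathbb N\to\mathbb N$ with $\chi'(ns)\notin ns$ for every list $ns$, and put $X'(xs)=\mathrm{decode}(\chi'(\mathrm{map}\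 \mathrm{encode}\ xs))$. A substitution is any function $\sigma:\mathcal V\to\Lambda$; $\iota=v$ is the identity substitution; $(\sigma,x:=N)(y)=N$ if $y=x$ and $\sigma\,y$ otherwise. For a substitution $\sigma$ and a list $xs$ of variables, $X(\sigma,xs)=X'(\text{concatenation of the lists }\mathrm{fv}(\sigma\,y)\text{ for }y\in xs)$. The action $M\bullet\sigma$ is defined by structural recursion: $c\,k\bullet\sigma=c\,k$; $v\,x\bullet\sigma=\sigma\,x$; $(M\cdot N)\bullet\sigma=(M\bullet\sigma)\cdot(N\bullet\sigma)$; $(\lambda[x:A]M)\bullet\sigma=\lambda[y:A\bullet\sigma](M\bullet(\sigma,x:=v\,y))$ with $y=X(\sigma,\mathrm{fv}\,M-x)$; $(\Pi[x:A]B)\bullet\sigma=\Pi[y:A\bullet\sigma](B\bullet(\sigma,x:=v\,y))$ with $y=X(\sigma,\mathrm{fv}\,B-x)$. Unary substitution is $M[x:=N]=M\bullet(\iota,x:=N)$. $\alpha$-conversion $\sim_\alpha$ is the inductively defined relation with rules: $c\,k\sim_\alpha c\,k$; $v\,x\sim_\alpha v\,x$; $M\cdot N\sim_\alpha M'\cdot N'$ if $M\sim_\alpha M'$ and $N\sim_\alpha N'$; $\lambda[x:A]M\sim_\alpha\lambda[x':A']M'$ if $A\sim_\alpha A'$ and there is a variable $y$ with $y\notin\mathrm{fv}\,M-x$, $y\notin\mathrm{fv}\,M'-x'$ and $M[x:=v\,y]\equiv M'[x':=v\,y]$; and the same rule with $\Pi$ in place of $\lambda$. $\beta$-contraction is $(\lambda[x:A]M)\cdot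 N\ \triangleright_\beta\ M[x:=N]$. One-step $\beta$-reduction $\to_\beta$ is its contextual closure, inductively: $M\to_\beta N$ if $M\triangleright_\beta N$; $\lambda[x:A]M\to_\beta\lambda[x:A]M'$ and $\Pi[x:A]M\to_\beta\Pi[x:A]M'$ if $M\to_\beta M'$; $\lambda[x:A]M\to_\beta\lambda[x:A']M$ and $\Pi[x:A]M\to_\beta\Pi[x:A']M$ if $A\to_\beta A'$; $M\cdot P\to_\beta N\cdot P$ and $P\cdot M\to_\beta P\cdot N$ if $M\to_\beta N$. $\beta$-conversion $\simeq_\beta$ is the equivalence (reflexive–symmetric–transitive) closure of $\sim_\alpha\cup\to_\beta$. Pure Type System: fix a binary relation $\mathcal A\subseteq\mathcal C\times\mathcal C$ (axioms) and a ternary relation $\mathcal R\subseteq\mathcal C\times\mathcal C\times\mathcal C$ (rules). A context is a finite list of pairs $(x,A)$ with $x\in\mathcal V$, $A\in\Lambda$; $\Gamma,x:A$ denotes the list $(x,A)::\Gamma$; $\mathrm{dom}\,\Gamma$ is the list of first components; $(x,A)\in\Gamma$ is list membership. The judgments $\Gamma\ \mathrm{ok}$ and $\Gamma\vdash M:A$ are defined mutually inductively by: (nil) $[\,]\ \mathrm{ok}$; (cons) if $\Gamma\ \mathrm{ok}$, $\Gamma\vdash A:c\,s$ and $x\notin\mathrm{dom}\,\Gamma$ then $\Gamma,x:A\ \mathrm{ok}$; (sort) if $\Gamma\ \mathrm{ok}$ and $\mathcal A\,s_1\,s_2$ then $\Gamma\vdash c\,s_1:c\,s_2$; (var) if $\Gamma\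 \mathrm{ok}$ and $(x,A)\in\Gamma$ then $\Gamma\vdash v\,x:A$; (prod) if $\mathcal R\,s_1\,s_2\,s_3$, $\Gamma\vdash A:c\,s_1$ and for every $y\notin\mathrm{dom}\,\Gamma$, $\Gamma,y:A\vdash B[x:=v\,y]:c\,s_2$, then $\Gamma\vdash\Pi[x:A]B:c\,s_3$; (abs) if $\mathcal R\,s_1\,s_2\,s_3$, $\Gamma\vdash A:c\,s_1$, for every $z\notin\mathrm{dom}\,\Gamma$, $\Gamma,z:A\vdash B[y:=v\,z]:c\,s_2$, and for every $z\notin\mathrm{dom}\,\Gamma$, $\Gamma,z:A\vdash M[x:=v\,z]:B[y:=v\,z]$, then $\Gamma\vdash\lambda[x:A]M:\Pi[y:A]B$; (app) if $\Gamma\vdash M:\Pi[x:A]B$, $\Gamma\vdash N:A$ and $\Gamma\vdash B[x:=N]:c\,s$ for some $s$, then $\Gamma\vdash M\cdot N:B[x:=N]$; (conv) if $\Gamma\vdash M:A$, $A\simeq_\beta B$ and $\Gamma\vdash B:c\,s$ for some $s$, then $\Gamma\vdash M:B$. (The premises quantified over all fresh names in (prod) and (abs) are infinitely branching.) $\Gamma\approx_\alpha\Delta$ means: $\Gamma$ and $\Delta$ have the same length and, position by position, the entries $(x,A)$ of $\Gamma$ and $(y,B)$ of $\Delta$ satisfy $x=y$ and $A\sim_\alpha B$. *)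

theory Defs
  imports Main
begin

datatype ('c, 'v) trm =
    Cst 'c
  | Var 'v
  | Lam 'v "('c, 'v) trm" "('c, 'v) trm"   (* Lam x A M  =  lambda[x:A] M *)
  | Pi  'v "('c, 'v) trm" "('c, 'v) trm"   (* Pi x A B   =  Pi[x:A] B *)
  | App "('c, 'v) trm" "('c, 'v) trm"

fun fv :: "('c, 'v) trm \<Rightarrow> 'v list" where
  "fv (Cst k) = []"
| "fv (Var x) = [x]"
| "fv (Lam x A M) = fv A @ removeAll x (fv M)"
| "fv (Pi x A B) = fv A @ removeAll x (fv B)"
| "fv (App M N) = fv M @ fv N"

definition Xp :: "(nat list \<Rightarrow> nat) \<Rightarrow> ('v \<Rightarrow> nat) \<Rightarrow> (nat \<Rightarrow> 'v) \<Rightarrow> 'v list \<Rightarrow> 'v" where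
  "Xp chi enc dec xs = dec (chi (map enc xs))"

definition Xs :: "(nat list \<Rightarrow> nat) \<Rightarrow> ('v \<Rightarrow> nat) \<Rightarrow> (nat \<Rightarrow> 'v) \<Rightarrow> ('v \<Rightarrow> ('c, 'v) trm) \<Rightarrow> 'v list \<Rightarrow> 'v" where
  "Xs chi enc dec \<sigma> xs = Xp chi enc dec (concat (map (\<lambda>y. fv (\<sigma> y)) xs))"

fun sbst :: "(nat list \<Rightarrow> nat) \<Rightarrow> ('v \<Rightarrow> nat) \<Rightarrow> (nat \<Rightarrow> 'v) \<Rightarrow> ('c, 'v) trm \<Rightarrow> ('v \<Rightarrow> ('c, 'v) trm) \<Rightarrow> ('c, 'v) trm" where
  "sbst chi enc dec (Cst k) \<sigma> = Cst k"
| "sbst chi enc dec (Var x) \<sigma> = \<sigma> x"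
| "sbst chi enc dec (App M N) \<sigma> = App (sbst chi enc dec M \<sigma>) (sbst chi enc dec N \<sigma>)"
| "sbst chi enc dec (Lam x A M) \<sigma> =
     (let y = Xs chi enc dec \<sigma> (removeAll x (fv M))
      in Lam y (sbst chi enc dec A \<sigma>) (sbst chi enc dec M (\<sigma>(x := Var y))))"
| "sbst chi enc dec (Pi x A B) \<sigma> =
     (let y = Xs chi enc dec \<sigma> (removeAll x (fv B))
      in Pi y (sbst chi enc dec A \<sigma>) (sbst chi enc dec B (\<sigma>(x := Var y))))"

definition usubst :: "(nat list \<Rightarrow> nat) \<Rightarrow> ('v \<Rightarrow> nat) \<Rightarrow> (nat \<Rightarrow> 'v) \<Rightarrow> ('c, 'v) trm \<Rightarrow> 'v \<Rightarrow> ('c, 'v) trm \<Rightarrow> ('c, 'v) trm" where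
  "usubst chi enc dec M x N = sbst chi enc dec M (Var(x := N))"

inductive alpha :: "(nat list \<Rightarrow> nat) \<Rightarrow> ('v \<Rightarrow> nat) \<Rightarrow> (nat \<Rightarrow> 'v) \<Rightarrow> ('c, 'v) trm \<Rightarrow> ('c, 'v) trm \<Rightarrow> bool"
  for chi enc dec where
  alpha_cst: "alpha chi enc dec (Cst k) (Cst k)"
| alpha_var: "alpha chi enc dec (Var x) (Var x)"
| alpha_app: "alpha chi enc dec M M' \<Longrightarrow> alpha chi enc dec N N' \<Longrightarrow> alpha chi enc dec (App M N) (App M' N')"
| alpha_lam: "alpha chi enc dec A A' \<Longrightarrow> y \<notin> set (removeAll x (fv M)) \<Longrightarrow> y \<notin> set (removeAll x' (fv M')) \<Longrightarrow>
    usubst chi enc dec M x (Var y) = usubst chi enc dec M' x' (Var y) \<Longrightarrow>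
    alpha chi enc dec (Lam x A M) (Lam x' A' M')"
| alpha_pi: "alpha chi enc dec A A' \<Longrightarrow> y \<notin> set (removeAll x (fv M)) \<Longrightarrow> y \<notin> set (removeAll x' (fv M')) \<Longrightarrow>
    usubst chi enc dec M x (Var y) = usubst chi enc dec M' x' (Var y) \<Longrightarrow>
    alpha chi enc dec (Pi x A M) (Pi x' A' M')"

inductive beta :: "(nat list \<Rightarrow> nat) \<Rightarrow> ('v \<Rightarrow> nat) \<Rightarrow> (nat \<Rightarrow> 'v) \<Rightarrow> ('c, 'v) trm \<Rightarrow> ('c, 'v) trm \<Rightarrow> bool"
  for chi enc dec where
  beta_contr: "beta chi enc dec (App (Lam x A M) N) (usubst chi enc dec M x N)"
| beta_lam_body: "beta chi enc dec M M' \<Longrightarrow> beta chi enc dec (Lam x A M) (Lam x A M')"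
| beta_pi_body: "beta chi enc dec M M' \<Longrightarrow> beta chi enc dec (Pi x A M) (Pi x A M')"
| beta_lam_ty: "beta chi enc dec A A' \<Longrightarrow> beta chi enc dec (Lam x A M) (Lam x A' M)"
| beta_pi_ty: "beta chi enc dec A A' \<Longrightarrow> beta chi enc dec (Pi x A M) (Pi x A' M)"
| beta_app_l: "beta chi enc dec M N \<Longrightarrow> beta chi enc dec (App M P) (App N P)"
| beta_app_r: "beta chi enc dec M N \<Longrightarrow> beta chi enc dec (App P M) (App P N)"

inductive bconv :: "(nat list \<Rightarrow> nat) \<Rightarrow> ('v \<Rightarrow> nat) \<Rightarrow> (nat \<Rightarrow> 'v) \<Rightarrow> ('c, 'v) trm \<Rightarrow> ('c, 'v) trm \<Rightarrow> bool"
  for chi enc dec where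
  bconv_alpha: "alpha chi enc dec M N \<Longrightarrow> bconv chi enc dec M N"
| bconv_beta: "beta chi enc dec M N \<Longrightarrow> bconv chi enc dec M N"
| bconv_refl: "bconv chi enc dec M M"
| bconv_sym: "bconv chi enc dec M N \<Longrightarrow> bconv chi enc dec N M"
| bconv_trans: "bconv chi enc dec M N \<Longrightarrow> bconv chi enc dec N P \<Longrightarrow> bconv chi enc dec M P"

type_synonym ('c, 'v) ctx = "('v \<times> ('c, 'v) trm) list"

text \<open>Pure Type System judgments; Ax = axioms, Rl = rules. Contexts: (x,A)#Gamma = Gamma, x:A.\<close>
inductive ctx_ok :: "(nat list \<Rightarrow> nat) \<Rightarrow> ('v \<Rightarrow> nat) \<Rightarrow> (nat \<Rightarrow> 'v) \<Rightarrow> ('c \<Rightarrow> 'c \<Rightarrow> bool) \<Rightarrow> ('c \<Rightarrow> 'c \<Rightarrow> 'c \<Rightarrow> bool)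
      \<Rightarrow> ('c, 'v) ctx \<Rightarrow> bool"
  and typing :: "(nat list \<Rightarrow> nat) \<Rightarrow> ('v \<Rightarrow> nat) \<Rightarrow> (nat \<Rightarrow> 'v) \<Rightarrow> ('c \<Rightarrow> 'c \<Rightarrow> bool) \<Rightarrow> ('c \<Rightarrow> 'c \<Rightarrow> 'c \<Rightarrow> bool)
      \<Rightarrow> ('c, 'v) ctx \<Rightarrow> ('c, 'v) trm \<Rightarrow> ('c, 'v) trm \<Rightarrow> bool"
  for chi enc dec Ax Rl where
  ok_nil: "ctx_ok chi enc dec Ax Rl []"
| ok_cons: "ctx_ok chi enc dec Ax Rl \<Gamma> \<Longrightarrow> typing chi enc dec Ax Rl \<Gamma> A (Cst s) \<Longrightarrow> x \<notin> set (map fst \<Gamma>) \<Longrightarrow>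
    ctx_ok chi enc dec Ax Rl ((x, A) # \<Gamma>)"
| ty_sort: "ctx_ok chi enc dec Ax Rl \<Gamma> \<Longrightarrow> Ax s1 s2 \<Longrightarrow> typing chi enc dec Ax Rl \<Gamma> (Cst s1) (Cst s2)"
| ty_var: "ctx_ok chi enc dec Ax Rl \<Gamma> \<Longrightarrow> (x, A) \<in> set \<Gamma> \<Longrightarrow> typing chi enc dec Ax Rl \<Gamma> (Var x) A"
| ty_prod: "Rl s1 s2 s3 \<Longrightarrow> typing chi enc dec Ax Rl \<Gamma> A (Cst s1) \<Longrightarrow>
    (\<forall>y. y \<notin> set (map fst \<Gamma>) \<longrightarrow>
        typing chi enc dec Ax Rl ((y, A) # \<Gamma>) (usubst chi enc dec B x (Var y)) (Cst s2)) \<Longrightarrow>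
    typing chi enc dec Ax Rl \<Gamma> (Pi x A B) (Cst s3)"
| ty_abs: "Rl s1 s2 s3 \<Longrightarrow> typing chi enc dec Ax Rl \<Gamma> A (Cst s1) \<Longrightarrow>
    (\<forall>z. z \<notin> set (map fst \<Gamma>) \<longrightarrow>
        typing chi enc dec Ax Rl ((z, A) # \<Gamma>) (usubst chi enc dec B y (Var z)) (Cst s2)) \<Longrightarrow>
    (\<forall>z. z \<notin> set (map fst \<Gamma>) \<longrightarrow>
        typing chi enc dec Ax Rl ((z, A) # \<Gamma>) (usubst chi enc dec M x (Var z)) (usubst chi enc dec B y (Var z))) \<Longrightarrow>
    typing chi enc dec Ax Rl \<Gamma> (Lam x A M) (Pi y A B)"
| ty_app: "typing chi enc dec Ax Rl \<Gamma> M (Pi x A B) \<Longrightarrow> typing chi enc dec Ax Rl \<Gamma> N A \<Longrightarrow>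
    typing chi enc dec Ax Rl \<Gamma> (usubst chi enc dec B x N) (Cst s) \<Longrightarrow>
    typing chi enc dec Ax Rl \<Gamma> (App M N) (usubst chi enc dec B x N)"
| ty_conv: "typing chi enc dec Ax Rl \<Gamma> M A \<Longrightarrow> bconv chi enc dec A B \<Longrightarrow> typing chi enc dec Ax Rl \<Gamma> B (Cst s) \<Longrightarrow>
    typing chi enc dec Ax Rl \<Gamma> M B"

definition ctx_alpha :: "(nat list \<Rightarrow> nat) \<Rightarrow> ('v \<Rightarrow> nat) \<Rightarrow> (nat \<Rightarrow> 'v) \<Rightarrow> ('c, 'v) ctx \<Rightarrow> ('c, 'v) ctx \<Rightarrow> bool" where
  "ctx_alpha chi enc dec \<Gamma> \<Delta> =
     list_all2 (\<lambda>(x, A) (y, B). x = y \<and> alpha chi enc dec A B) \<Gamma> \<Delta>"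

end

theory Submission
  imports Defs
begin

(* Alpha-conversion is decided by the canonical renaming M \<bullet> Var. The name chosen for a
   binder depends only on the free variables of the substituted body, so alpha-equivalent
   terms have equal images under every substitution; conversely, equal canonical renamings
   supply the common fresh name that the alpha rules ask for. *)

abbreviation fv_image :: "('v \<Rightarrow> ('c, 'v) trm) \<Rightarrow> 'v list \<Rightarrow> 'v list" where
  "fv_image \<sigma> xs \<equiv> concat (map (\<lambda>y. fv (\<sigma> y)) xs)"

lemma fv_image_Var [simp]: "fv_image Var xs = xs"
  by (induction xs) auto

lemma removeAll_fv_image_upd:
  assumes "y \<notin> set (fv_image \<sigma> (removeAll x xs))"
  shows "removeAll y (fv_image (\<sigma>(x := Var y)) xs) = fv_image \<sigma> (removeAll x xs)"
  using assms by (induction xs) auto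

locale pts_syntax =
  fixes chi :: "nat list \<Rightarrow> nat" and enc :: "'v \<Rightarrow> nat" and dec :: "nat \<Rightarrow> 'v"
begin

abbreviation subst_action :: "('c, 'v) trm \<Rightarrow> ('v \<Rightarrow> ('c, 'v) trm) \<Rightarrow> ('c, 'v) trm"
    (infixl "\<bullet>" 75) where
  "M \<bullet> \<sigma> \<equiv> sbst chi enc dec M \<sigma>"

abbreviation X :: "('v \<Rightarrow> ('c, 'v) trm) \<Rightarrow> 'v list \<Rightarrow> 'v" where
  "X \<sigma> xs \<equiv> Xs chi enc dec \<sigma> xs"

abbreviation subst1 :: "('c, 'v) trm \<Rightarrow> 'v \<Rightarrow> ('c, 'v) trm \<Rightarrow> ('c, 'v) trm"
    ("_\<langle>_ := _\<rangle>" [1000, 0, 0] 1000) where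
  "M\<langle>x := N\<rangle> \<equiv> usubst chi enc dec M x N"

abbreviation alpha_eq :: "('c, 'v) trm \<Rightarrow> ('c, 'v) trm \<Rightarrow> bool" (infix "\<sim>\<^sub>\<alpha>" 50) where
  "M \<sim>\<^sub>\<alpha> N \<equiv> alpha chi enc dec M N"

abbreviation ctx_alpha_eq :: "('c, 'v) ctx \<Rightarrow> ('c, 'v) ctx \<Rightarrow> bool" (infix "\<approx>\<^sub>\<alpha>" 50) where
  "\<Gamma> \<approx>\<^sub>\<alpha> \<Delta> \<equiv> ctx_alpha chi enc dec \<Gamma> \<Delta>"

lemma Xs_cong:
  assumes "\<And>u. u \<in> set xs \<Longrightarrow> \<sigma> u = \<sigma>' u"
  shows "X \<sigma> xs = X \<sigma>' xs"
proof -
  have "map (\<lambda>y. fv (\<sigma> y)) xs = map (\<lambda>y. fv (\<sigma>' y)) xs"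
    using assms by (intro map_cong) simp_all
  then show ?thesis
    by (simp only: Xs_def)
qed

lemma ctx_alpha_Nil_left [simp]: "[] \<approx>\<^sub>\<alpha> \<Delta> \<longleftrightarrow> \<Delta> = []"
  by (simp add: ctx_alpha_def)

lemma ctx_alpha_Cons_Cons [simp]:
  "(x, A) # \<Gamma> \<approx>\<^sub>\<alpha> (y, C) # \<Delta> \<longleftrightarrow> x = y \<and> A \<sim>\<^sub>\<alpha> C \<and> \<Gamma> \<approx>\<^sub>\<alpha> \<Delta>"
  by (simp add: ctx_alpha_def)

lemma ctx_alpha_Cons_leftE:
  assumes "(x, A) # \<Gamma> \<approx>\<^sub>\<alpha> \<Delta>"
  obtains C \<Delta>' where "\<Delta> = (x, C) # \<Delta>'" and "A \<sim>\<^sub>\<alpha> C" and "\<Gamma> \<approx>\<^sub>\<alpha> \<Delta>'"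
  using assms by (cases \<Delta>) (auto simp: ctx_alpha_def)

lemma ctx_alpha_dom: "\<Gamma> \<approx>\<^sub>\<alpha> \<Delta> \<Longrightarrow> map fst \<Gamma> = map fst \<Delta>"
  unfolding ctx_alpha_def by (induction rule: list_all2_induct) auto

lemma ctx_alpha_mem:
  "\<Gamma> \<approx>\<^sub>\<alpha> \<Delta> \<Longrightarrow> (x, A) \<in> set \<Gamma> \<Longrightarrow> \<exists>C. (x, C) \<in> set \<Delta> \<and> A \<sim>\<^sub>\<alpha> C"
  unfolding ctx_alpha_def by (induction rule: list_all2_induct) auto

end

locale fresh_names = pts_syntax chi enc dec
  for chi :: "nat list \<Rightarrow> nat" and enc :: "'v \<Rightarrow> nat" and dec :: "nat \<Rightarrow> 'v" +
  assumes enc_dec: "\<forall>n. enc (dec n) = n"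
    and chi_fresh: "\<forall>ns. chi ns \<notin> set ns"
begin

lemma X_fresh: "X \<sigma> xs \<notin> set (fv_image \<sigma> xs)"
proof
  let ?ns = "map enc (fv_image \<sigma> xs)"
  assume "X \<sigma> xs \<in> set (fv_image \<sigma> xs)"
  then have "enc (dec (chi ?ns)) \<in> set ?ns"
    unfolding Xs_def Xp_def by simp
  then have "chi ?ns \<in> set ?ns"
    by (simp only: enc_dec[rule_format])
  with chi_fresh show False
    by blast
qed

lemma Xs_Var [simp]: "X Var xs = Xp chi enc dec xs"
  by (simp add: Xs_def)

lemma Xp_fresh: "Xp chi enc dec xs \<notin> set xs"
  using X_fresh[of Var xs] by simp

lemma fv_subst: "fv (M \<bullet> \<sigma>) = fv_image \<sigma> (fv M)"
proof (induction M arbitrary: \<sigma>)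
  case (Lam x A M)
  then show ?case
    using removeAll_fv_image_upd[OF X_fresh[of \<sigma> "removeAll x (fv M)"]] by (simp add: Let_def)
next
  case (Pi x A M)
  then show ?case
    using removeAll_fv_image_upd[OF X_fresh[of \<sigma> "removeAll x (fv M)"]] by (simp add: Let_def)
qed auto

lemma fv_image_subst: "fv_image \<tau> (fv_image \<sigma> xs) = fv_image (\<lambda>u. \<sigma> u \<bullet> \<tau>) xs"
  by (induction xs) (simp_all add: fv_subst)

lemma subst_cong: "(\<And>u. u \<in> set (fv M) \<Longrightarrow> \<sigma> u = \<sigma>' u) \<Longrightarrow> M \<bullet> \<sigma> = M \<bullet> \<sigma>'"
proof (induction M arbitrary: \<sigma> \<sigma>')
  case (Lam x A M)
  have "X \<sigma> (removeAll x (fv M)) = X \<sigma>' (removeAll x (fv M))"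
    using Lam.prems by (intro Xs_cong) simp
  moreover have "A \<bullet> \<sigma> = A \<bullet> \<sigma>'"
    using Lam.prems by (intro Lam.IH(1)) simp
  moreover have "M \<bullet> \<sigma>(x := Var y) = M \<bullet> \<sigma>'(x := Var y)" for y
    using Lam.prems by (intro Lam.IH(2)) simp
  ultimately show ?case
    by (simp add: Let_def)
next
  case (Pi x A M)
  have "X \<sigma> (removeAll x (fv M)) = X \<sigma>' (removeAll x (fv M))"
    using Pi.prems by (intro Xs_cong) simp
  moreover have "A \<bullet> \<sigma> = A \<bullet> \<sigma>'"
    using Pi.prems by (intro Pi.IH(1)) simp
  moreover have "M \<bullet> \<sigma>(x := Var y) = M \<bullet> \<sigma>'(x := Var y)" for y
    using Pi.prems by (intro Pi.IH(2)) simp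
  ultimately show ?case
    by (simp add: Let_def)
next
  case (App M N)
  have "M \<bullet> \<sigma> = M \<bullet> \<sigma>'" and "N \<bullet> \<sigma> = N \<bullet> \<sigma>'"
    using App.prems by (intro App.IH; simp)+
  then show ?case
    by simp
qed simp_all

lemma subst_comp_binder:
  fixes x \<sigma> \<tau>
  assumes IH: "\<And>\<rho> \<rho>'. M \<bullet> \<rho> \<bullet> \<rho>' = M \<bullet> (\<lambda>u. \<rho> u \<bullet> \<rho>')"
  defines "y \<equiv> X \<sigma> (removeAll x (fv M))"
    and "z \<equiv> X (\<lambda>u. \<sigma> u \<bullet> \<tau>) (removeAll x (fv M))"
  shows "X \<tau> (removeAll y (fv (M \<bullet> \<sigma>(x := Var y)))) = z"
    and "M \<bullet> \<sigma>(x := Var y) \<bullet> \<tau>(y := Var z) = M \<bullet> (\<lambda>u. \<sigma> u \<bullet> \<tau>)(x := Var z)"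
proof -
  have y_fresh: "y \<notin> set (fv_image \<sigma> (removeAll x (fv M)))"
    unfolding y_def by (rule X_fresh)
  then have "removeAll y (fv (M \<bullet> \<sigma>(x := Var y))) = fv_image \<sigma> (removeAll x (fv M))"
    by (simp only: fv_subst removeAll_fv_image_upd[OF y_fresh])
  then show "X \<tau> (removeAll y (fv (M \<bullet> \<sigma>(x := Var y)))) = z"
    unfolding z_def Xs_def by (simp only: fv_image_subst)
  show "M \<bullet> \<sigma>(x := Var y) \<bullet> \<tau>(y := Var z) = M \<bullet> (\<lambda>u. \<sigma> u \<bullet> \<tau>)(x := Var z)"
    unfolding IH
  proof (rule subst_cong)
    fix u assume "u \<in> set (fv M)"
    show "(\<sigma>(x := Var y)) u \<bullet> \<tau>(y := Var z) = ((\<lambda>u. \<sigma> u \<bullet> \<tau>)(x := Var z)) u"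
    proof (cases "u = x")
      case False
      with \<open>u \<in> set (fv M)\<close> y_fresh have "y \<notin> set (fv (\<sigma> u))" by auto
      with False show ?thesis by (auto intro!: subst_cong)
    qed simp
  qed
qed

lemma subst_comp: "M \<bullet> \<sigma> \<bullet> \<tau> = M \<bullet> (\<lambda>u. \<sigma> u \<bullet> \<tau>)"
proof (induction M arbitrary: \<sigma> \<tau>)
  case (Lam x A M)
  then show ?case using subst_comp_binder[OF Lam.IH(2)] by (simp add: Let_def)
next
  case (Pi x A M)
  then show ?case using subst_comp_binder[OF Pi.IH(2)] by (simp add: Let_def)
qed auto

lemma subst_rename:
  assumes "y \<notin> set (removeAll x (fv M))"
  shows "M\<langle>x := Var y\<rangle> \<bullet> \<sigma>(y := N) = M \<bullet> \<sigma>(x := N)"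
  unfolding usubst_def subst_comp
  by (rule subst_cong) (use assms in auto)

lemma fv_rename:
  assumes "y \<notin> set (removeAll x (fv M))"
  shows "removeAll y (fv (M\<langle>x := Var y\<rangle>)) = removeAll x (fv M)"
  using removeAll_fv_image_upd[of y Var x "fv M"] assms unfolding usubst_def fv_subst by simp

lemma renamings_agree:
  assumes "y \<notin> set (removeAll x (fv M))" and "y \<notin> set (removeAll x' (fv M'))"
    and "M\<langle>x := Var y\<rangle> = M'\<langle>x' := Var y\<rangle>"
  shows "removeAll x (fv M) = removeAll x' (fv M')"
    and "M \<bullet> \<sigma>(x := N) = M' \<bullet> \<sigma>(x' := N)"
proof -
  have "removeAll x (fv M) = removeAll y (fv (M\<langle>x := Var y\<rangle>))"
    using fv_rename[OF assms(1)] by simp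
  also have "\<dots> = removeAll x' (fv M')"
    using fv_rename[OF assms(2)] assms(3) by simp
  finally show "removeAll x (fv M) = removeAll x' (fv M')" .
  have "M \<bullet> \<sigma>(x := N) = M\<langle>x := Var y\<rangle> \<bullet> \<sigma>(y := N)"
    using subst_rename[OF assms(1)] by simp
  also have "\<dots> = M' \<bullet> \<sigma>(x' := N)"
    using subst_rename[OF assms(2)] assms(3) by simp
  finally show "M \<bullet> \<sigma>(x := N) = M' \<bullet> \<sigma>(x' := N)" .
qed

lemma alpha_imp_subst_eq: "M \<sim>\<^sub>\<alpha> N \<Longrightarrow> M \<bullet> \<sigma> = N \<bullet> \<sigma>"
proof (induction arbitrary: \<sigma> rule: alpha.induct)
  case (alpha_lam A A' y x M x' M')
  then show ?case using renamings_agree[OF alpha_lam.hyps(2-4)] by (simp add: Let_def)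
next
  case (alpha_pi A A' y x M x' M')
  then show ?case using renamings_agree[OF alpha_pi.hyps(2-4)] by (simp add: Let_def)
qed auto

lemma subst_Var_eq_imp_alpha: "M \<bullet> Var = N \<bullet> Var \<Longrightarrow> M \<sim>\<^sub>\<alpha> N"
proof (induction M arbitrary: N)
  case (Lam x A M)
  then obtain x' A' M' where N: "N = Lam x' A' M'"
    by (cases N) (auto simp: Let_def)
  define y where "y = Xp chi enc dec (removeAll x (fv M))"
  from Lam.prems have "Xp chi enc dec (removeAll x' (fv M')) = y" and "A \<bullet> Var = A' \<bullet> Var"
    and "M \<bullet> Var(x := Var y) = M' \<bullet> Var(x' := Var y)"
    unfolding N y_def by (auto simp: Let_def)
  then show ?case
    unfolding N using Xp_fresh[of "removeAll x (fv M)"] Xp_fresh[of "removeAll x' (fv M')"]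
    by (auto simp: usubst_def y_def intro!: alpha_lam[where y = y] Lam.IH(1))
next
  case (Pi x A M)
  then obtain x' A' M' where N: "N = Pi x' A' M'"
    by (cases N) (auto simp: Let_def)
  define y where "y = Xp chi enc dec (removeAll x (fv M))"
  from Pi.prems have "Xp chi enc dec (removeAll x' (fv M')) = y" and "A \<bullet> Var = A' \<bullet> Var"
    and "M \<bullet> Var(x := Var y) = M' \<bullet> Var(x' := Var y)"
    unfolding N y_def by (auto simp: Let_def)
  then show ?case
    unfolding N using Xp_fresh[of "removeAll x (fv M)"] Xp_fresh[of "removeAll x' (fv M')"]
    by (auto simp: usubst_def y_def intro!: alpha_pi[where y = y] Pi.IH(1))
next
  case (Cst k)
  then show ?case by (cases N) (auto simp: Let_def intro: alpha.intros)
next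
  case (Var x)
  then show ?case by (cases N) (auto simp: Let_def intro: alpha.intros)
next
  case (App M1 M2)
  then show ?case by (cases N) (auto simp: Let_def intro: alpha.intros)
qed

lemma alpha_iff_subst_Var_eq: "M \<sim>\<^sub>\<alpha> N \<longleftrightarrow> M \<bullet> Var = N \<bullet> Var"
  using alpha_imp_subst_eq subst_Var_eq_imp_alpha by blast

lemma alpha_refl: "M \<sim>\<^sub>\<alpha> M"
  by (simp add: alpha_iff_subst_Var_eq)

lemma alpha_sym: "M \<sim>\<^sub>\<alpha> N \<Longrightarrow> N \<sim>\<^sub>\<alpha> M"
  by (simp add: alpha_iff_subst_Var_eq)

lemma alpha_trans: "M \<sim>\<^sub>\<alpha> N \<Longrightarrow> N \<sim>\<^sub>\<alpha> P \<Longrightarrow> M \<sim>\<^sub>\<alpha> P"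
  by (simp add: alpha_iff_subst_Var_eq)

lemma alpha_subst1_arg: "N \<sim>\<^sub>\<alpha> N' \<Longrightarrow> B\<langle>x := N\<rangle> \<sim>\<^sub>\<alpha> B\<langle>x := N'\<rangle>"
  unfolding alpha_iff_subst_Var_eq usubst_def subst_comp
  by (rule arg_cong[where f = "sbst chi enc dec B"]) auto

lemma alpha_Pi_dom: "A \<sim>\<^sub>\<alpha> A' \<Longrightarrow> Pi x A B \<sim>\<^sub>\<alpha> Pi x A' B"
  using alpha_pi[OF _ Xp_fresh Xp_fresh refl] by blast

lemma alpha_Cst_left_iff [simp]: "Cst k \<sim>\<^sub>\<alpha> N \<longleftrightarrow> N = Cst k"
  by (subst alpha.simps) auto

lemma alpha_Var_left_iff [simp]: "Var x \<sim>\<^sub>\<alpha> N \<longleftrightarrow> N = Var x"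
  by (subst alpha.simps) auto

lemma alpha_App_leftE:
  assumes "App M1 M2 \<sim>\<^sub>\<alpha> N"
  obtains N1 N2 where "N = App N1 N2" and "M1 \<sim>\<^sub>\<alpha> N1" and "M2 \<sim>\<^sub>\<alpha> N2"
  using assms by (cases rule: alpha.cases) auto

lemma alpha_Lam_leftE:
  assumes "Lam x A M \<sim>\<^sub>\<alpha> N"
  obtains x' A' M' where "N = Lam x' A' M'" and "A \<sim>\<^sub>\<alpha> A'"
    and "\<And>z. M\<langle>x := Var z\<rangle> = M'\<langle>x' := Var z\<rangle>"
  using assms
proof (cases rule: alpha.cases)
  case (alpha_lam A' y x' M')
  then show ?thesis
    using that renamings_agree(2)[OF alpha_lam(3-5), of Var] by (simp add: usubst_def)
qed

lemma alpha_Pi_leftE: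
  assumes "Pi x A B \<sim>\<^sub>\<alpha> N"
  obtains x' A' B' where "N = Pi x' A' B'" and "A \<sim>\<^sub>\<alpha> A'"
    and "\<And>z. B\<langle>x := Var z\<rangle> = B'\<langle>x' := Var z\<rangle>"
  using assms
proof (cases rule: alpha.cases)
  case (alpha_pi A' y x' B')
  then show ?thesis
    using that renamings_agree(2)[OF alpha_pi(3-5), of Var] by (simp add: usubst_def)
qed

end

locale pts_judgements = pts_syntax chi enc dec
  for chi :: "nat list \<Rightarrow> nat" and enc :: "'v \<Rightarrow> nat" and dec :: "nat \<Rightarrow> 'v" +
  fixes Ax :: "'c \<Rightarrow> 'c \<Rightarrow> bool" and Rl :: "'c \<Rightarrow> 'c \<Rightarrow> 'c \<Rightarrow> bool"
begin

abbreviation ok :: "('c, 'v) ctx \<Rightarrow> bool" where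
  "ok \<Gamma> \<equiv> ctx_ok chi enc dec Ax Rl \<Gamma>"

abbreviation typing_judgement :: "('c, 'v) ctx \<Rightarrow> ('c, 'v) trm \<Rightarrow> ('c, 'v) trm \<Rightarrow> bool"
    ("_ \<turnstile> _ : _" [51, 51, 51] 50) where
  "\<Gamma> \<turnstile> M : A \<equiv> typing chi enc dec Ax Rl \<Gamma> M A"

lemma weakening:
  "\<Gamma> \<turnstile> M : A \<Longrightarrow> set \<Gamma> \<subseteq> set \<Gamma>' \<Longrightarrow> ok \<Gamma>' \<Longrightarrow> \<Gamma>' \<turnstile> M : A"
proof (induction arbitrary: \<Gamma>' rule: ctx_ok_typing.inducts(2)[where ?P1.0 = "\<lambda>_. True"])
  case (ty_prod s1 s2 s3 \<Gamma> A B x)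
  have A: "\<Gamma>' \<turnstile> A : Cst s1"
    using ty_prod by blast
  have "(y, A) # \<Gamma>' \<turnstile> B\<langle>x := Var y\<rangle> : Cst s2" if "y \<notin> set (map fst \<Gamma>')" for y
  proof -
    have "y \<notin> set (map fst \<Gamma>)"
      using that ty_prod.prems(1) by force
    moreover have "ok ((y, A) # \<Gamma>')"
      using ty_prod.prems(2) A that by (rule ok_cons)
    ultimately show ?thesis
      using ty_prod.IH(2) ty_prod.prems(1) by (metis insert_mono list.set(2))
  qed
  then show ?case
    by (intro ctx_ok_typing.ty_prod[where Rl = Rl, OF ty_prod.hyps(1) A]) blast
next
  case (ty_abs s1 s2 s3 \<Gamma> A B y M x)
  have A: "\<Gamma>' \<turnstile> A : Cst s1"
    using ty_abs by blast
  have "(z, A) # \<Gamma>' \<turnstile> B\<langle>y := Var z\<rangle> : Cst s2 \<and> (z, A) # \<Gamma>' \<turnstile> M\<langle>x := Var z\<rangle> : B\<langle>y := Var z\<rangle>"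
    if "z \<notin> set (map fst \<Gamma>')" for z
  proof -
    have "z \<notin> set (map fst \<Gamma>)"
      using that ty_abs.prems(1) by force
    moreover have "ok ((z, A) # \<Gamma>')"
      using ty_abs.prems(2) A that by (rule ok_cons)
    ultimately show ?thesis
      using ty_abs.IH(2,3) ty_abs.prems(1) by (metis insert_mono list.set(2))
  qed
  then show ?case
    by (intro ctx_ok_typing.ty_abs[where Rl = Rl, OF ty_abs.hyps(1) A]) blast+
next
  case (ty_sort \<Gamma> s1 s2)
  then show ?case by (simp add: ctx_ok_typing.ty_sort)
next
  case (ty_var \<Gamma> x A)
  then show ?case by (auto intro: ctx_ok_typing.ty_var)
next
  case (ty_app \<Gamma> M x A B N s)
  then show ?case by (blast intro: ctx_ok_typing.ty_app)
next
  case (ty_conv \<Gamma> M A B s)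
  then show ?case by (blast intro: ctx_ok_typing.ty_conv)
qed simp_all

lemma ty_conv_alpha: "\<Gamma> \<turnstile> M : A \<Longrightarrow> A \<sim>\<^sub>\<alpha> B \<Longrightarrow> \<Gamma> \<turnstile> B : Cst s \<Longrightarrow> \<Gamma> \<turnstile> M : B"
  by (rule ctx_ok_typing.ty_conv[OF _ bconv_alpha])

end

locale pts = fresh_names chi enc dec + pts_judgements chi enc dec Ax Rl
  for chi :: "nat list \<Rightarrow> nat" and enc :: "'v \<Rightarrow> nat" and dec :: "nat \<Rightarrow> 'v"
    and Ax :: "'c \<Rightarrow> 'c \<Rightarrow> bool" and Rl :: "'c \<Rightarrow> 'c \<Rightarrow> 'c \<Rightarrow> bool"
begin

(* The context half is strengthened to well-sortedness of every alpha-variant of an entry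
   type: the variable case needs it. *)
lemma alpha_invariance:
  shows "ok \<Gamma> \<Longrightarrow> \<Gamma> \<approx>\<^sub>\<alpha> \<Delta> \<Longrightarrow>
      ok \<Delta> \<and> (\<forall>x A A'. (x, A) \<in> set \<Gamma> \<longrightarrow> A \<sim>\<^sub>\<alpha> A' \<longrightarrow> (\<exists>s. \<Delta> \<turnstile> A' : Cst s))"
    and "\<Gamma> \<turnstile> M : A \<Longrightarrow> \<Gamma> \<approx>\<^sub>\<alpha> \<Delta> \<Longrightarrow> M \<sim>\<^sub>\<alpha> M' \<Longrightarrow> A \<sim>\<^sub>\<alpha> A' \<Longrightarrow>
      \<Delta> \<turnstile> M' : A'"
proof (induction arbitrary: \<Delta> and \<Delta> M' A' rule: ctx_ok_typing.inducts)
  case ok_nil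
  then show ?case by (simp add: ctx_ok_typing.ok_nil)
next
  case (ok_cons \<Gamma> A s x)
  from ok_cons.prems obtain C \<Delta>' where \<Delta>: "\<Delta> = (x, C) # \<Delta>'"
    and "A \<sim>\<^sub>\<alpha> C" and "\<Gamma> \<approx>\<^sub>\<alpha> \<Delta>'"
    by (rule ctx_alpha_Cons_leftE)
  have "ok \<Delta>'" and entries: "\<And>y D D'. (y, D) \<in> set \<Gamma> \<Longrightarrow> D \<sim>\<^sub>\<alpha> D' \<Longrightarrow> \<exists>s. \<Delta>' \<turnstile> D' : Cst s"
    using ok_cons.IH(2)[OF \<open>\<Gamma> \<approx>\<^sub>\<alpha> \<Delta>'\<close>] by blast+
  have sorted: "\<Delta>' \<turnstile> D : Cst s" if "A \<sim>\<^sub>\<alpha> D" for D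
    using ok_cons.IH(4)[OF \<open>\<Gamma> \<approx>\<^sub>\<alpha> \<Delta>'\<close> that alpha_refl] .
  have "x \<notin> set (map fst \<Delta>')"
    using ok_cons.hyps ctx_alpha_dom[OF \<open>\<Gamma> \<approx>\<^sub>\<alpha> \<Delta>'\<close>] by simp
  then have "ok \<Delta>"
    unfolding \<Delta> using \<open>ok \<Delta>'\<close> sorted[OF \<open>A \<sim>\<^sub>\<alpha> C\<close>] by (blast intro: ctx_ok_typing.ok_cons)
  moreover have "\<exists>s. \<Delta> \<turnstile> D' : Cst s" if "(y, D) \<in> set ((x, A) # \<Gamma>)" and "D \<sim>\<^sub>\<alpha> D'" for y D D'
  proof -
    from that(1) have "(y, D) = (x, A) \<or> (y, D) \<in> set \<Gamma>"
      by simp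
    then obtain s' where "\<Delta>' \<turnstile> D' : Cst s'"
      using sorted entries \<open>D \<sim>\<^sub>\<alpha> D'\<close> by blast
    then show ?thesis
      using weakening[OF _ _ \<open>ok \<Delta>\<close>] unfolding \<Delta> by (meson set_subset_Cons)
  qed
  ultimately show ?case
    by blast
next
  case (ty_sort \<Gamma> s1 s2)
  then show ?case
    by (auto intro: ctx_ok_typing.ty_sort)
next
  case (ty_var \<Gamma> x A)
  obtain C where "(x, C) \<in> set \<Delta>" and "A \<sim>\<^sub>\<alpha> C"
    using ctx_alpha_mem[OF ty_var.prems(1) ty_var.hyps] by blast
  from ty_var.IH(2)[OF ty_var.prems(1)] obtain s where "ok \<Delta>" and "\<Delta> \<turnstile> A' : Cst s"
    using ty_var.hyps ty_var.prems(3) by blast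
  have "\<Delta> \<turnstile> Var x : C"
    using \<open>ok \<Delta>\<close> \<open>(x, C) \<in> set \<Delta>\<close> by (rule ctx_ok_typing.ty_var)
  moreover have "C \<sim>\<^sub>\<alpha> A'"
    using \<open>A \<sim>\<^sub>\<alpha> C\<close> ty_var.prems(3) alpha_sym alpha_trans by blast
  ultimately show ?case
    using ty_var.prems(2) ty_conv_alpha[OF _ _ \<open>\<Delta> \<turnstile> A' : Cst s\<close>] by simp
next
  case (ty_prod s1 s2 s3 \<Gamma> A B x)
  from ty_prod.prems(2) obtain x1 A1 B1 where M': "M' = Pi x1 A1 B1" and "A \<sim>\<^sub>\<alpha> A1"
    and B1: "\<And>z. B\<langle>x := Var z\<rangle> = B1\<langle>x1 := Var z\<rangle>"
    by (elim alpha_Pi_leftE) blast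
  have A1: "\<Delta> \<turnstile> A1 : Cst s1"
    using ty_prod.IH(3)[OF ty_prod.prems(1) \<open>A \<sim>\<^sub>\<alpha> A1\<close> alpha_refl] .
  have "(z, A1) # \<Delta> \<turnstile> B1\<langle>x1 := Var z\<rangle> : Cst s2" if "z \<notin> set (map fst \<Delta>)" for z
  proof -
    have "z \<notin> set (map fst \<Gamma>)"
      using that ctx_alpha_dom[OF ty_prod.prems(1)] by simp
    then have IH: "\<And>\<Delta>0 N T. (z, A) # \<Gamma> \<approx>\<^sub>\<alpha> \<Delta>0 \<Longrightarrow> B\<langle>x := Var z\<rangle> \<sim>\<^sub>\<alpha> N \<Longrightarrow>
        Cst s2 \<sim>\<^sub>\<alpha> T \<Longrightarrow> \<Delta>0 \<turnstile> N : T"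
      using ty_prod.IH(4) by blast
    show ?thesis
      by (rule IH) (simp_all add: ty_prod.prems(1) \<open>A \<sim>\<^sub>\<alpha> A1\<close> B1 alpha_refl)
  qed
  then show ?case
    using ty_prod.prems(3) unfolding M'
    by (auto intro!: ctx_ok_typing.ty_prod[where Rl = Rl, OF ty_prod.IH(1) A1])
next
  case (ty_abs s1 s2 s3 \<Gamma> A B y M x)
  from ty_abs.prems(2) obtain x1 A1 M1 where M': "M' = Lam x1 A1 M1" and "A \<sim>\<^sub>\<alpha> A1"
    and M1: "\<And>z. M\<langle>x := Var z\<rangle> = M1\<langle>x1 := Var z\<rangle>"
    by (elim alpha_Lam_leftE) blast
  from ty_abs.prems(3) obtain y2 A2 B2 where A': "A' = Pi y2 A2 B2" and "A \<sim>\<^sub>\<alpha> A2"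
    and B2: "\<And>z. B\<langle>y := Var z\<rangle> = B2\<langle>y2 := Var z\<rangle>"
    by (elim alpha_Pi_leftE) blast
  have A1: "\<Delta> \<turnstile> A1 : Cst s1" and A2: "\<Delta> \<turnstile> A2 : Cst s1"
    using ty_abs.IH(3)[OF ty_abs.prems(1) _ alpha_refl] \<open>A \<sim>\<^sub>\<alpha> A1\<close> \<open>A \<sim>\<^sub>\<alpha> A2\<close> by blast+
  have body: "(z, D) # \<Delta> \<turnstile> B2\<langle>y2 := Var z\<rangle> : Cst s2
      \<and> (z, D) # \<Delta> \<turnstile> M1\<langle>x1 := Var z\<rangle> : B2\<langle>y2 := Var z\<rangle>"
    if "z \<notin> set (map fst \<Delta>)" and "A \<sim>\<^sub>\<alpha> D" for z D
  proof -
    have "z \<notin> set (map fst \<Gamma>)"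
      using that(1) ctx_alpha_dom[OF ty_abs.prems(1)] by simp
    then have IHB: "\<And>\<Delta>0 N T. (z, A) # \<Gamma> \<approx>\<^sub>\<alpha> \<Delta>0 \<Longrightarrow> B\<langle>y := Var z\<rangle> \<sim>\<^sub>\<alpha> N \<Longrightarrow>
        Cst s2 \<sim>\<^sub>\<alpha> T \<Longrightarrow> \<Delta>0 \<turnstile> N : T"
      and IHM: "\<And>\<Delta>0 N T. (z, A) # \<Gamma> \<approx>\<^sub>\<alpha> \<Delta>0 \<Longrightarrow> M\<langle>x := Var z\<rangle> \<sim>\<^sub>\<alpha> N \<Longrightarrow>
        B\<langle>y := Var z\<rangle> \<sim>\<^sub>\<alpha> T \<Longrightarrow> \<Delta>0 \<turnstile> N : T"
      using ty_abs.IH(4,5) by blast+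
    have ctx: "(z, A) # \<Gamma> \<approx>\<^sub>\<alpha> (z, D) # \<Delta>"
      using ty_abs.prems(1) that(2) by simp
    show ?thesis
      using IHB[OF ctx] IHM[OF ctx] by (simp add: B2 M1 alpha_refl)
  qed
  have "\<Delta> \<turnstile> Lam x1 A1 M1 : Pi y2 A1 B2"
    using body \<open>A \<sim>\<^sub>\<alpha> A1\<close>
    by (intro ctx_ok_typing.ty_abs[where Rl = Rl, OF ty_abs.IH(1) A1]) blast+
  moreover have "\<Delta> \<turnstile> Pi y2 A2 B2 : Cst s3"
    using body \<open>A \<sim>\<^sub>\<alpha> A2\<close>
    by (intro ctx_ok_typing.ty_prod[where Rl = Rl, OF ty_abs.IH(1) A2]) blast
  moreover have "A1 \<sim>\<^sub>\<alpha> A2"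
    using \<open>A \<sim>\<^sub>\<alpha> A1\<close> \<open>A \<sim>\<^sub>\<alpha> A2\<close> alpha_sym alpha_trans by blast
  ultimately show ?case
    unfolding M' A' by (blast intro: ty_conv_alpha alpha_Pi_dom)
next
  case (ty_app \<Gamma> M x A B N s)
  from ty_app.prems(2) obtain M1 N1 where M': "M' = App M1 N1"
    and "M \<sim>\<^sub>\<alpha> M1" and "N \<sim>\<^sub>\<alpha> N1"
    by (rule alpha_App_leftE)
  have "B\<langle>x := N\<rangle> \<sim>\<^sub>\<alpha> B\<langle>x := N1\<rangle>"
    using \<open>N \<sim>\<^sub>\<alpha> N1\<close> by (rule alpha_subst1_arg)
  have "\<Delta> \<turnstile> App M1 N1 : B\<langle>x := N1\<rangle>"
  proof (rule ctx_ok_typing.ty_app)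
    show "\<Delta> \<turnstile> M1 : Pi x A B"
      using ty_app.IH(2)[OF ty_app.prems(1) \<open>M \<sim>\<^sub>\<alpha> M1\<close> alpha_refl] .
    show "\<Delta> \<turnstile> N1 : A"
      using ty_app.IH(4)[OF ty_app.prems(1) \<open>N \<sim>\<^sub>\<alpha> N1\<close> alpha_refl] .
    show "\<Delta> \<turnstile> B\<langle>x := N1\<rangle> : Cst s"
      using ty_app.IH(6)[OF ty_app.prems(1) \<open>B\<langle>x := N\<rangle> \<sim>\<^sub>\<alpha> B\<langle>x := N1\<rangle>\<close> alpha_refl] .
  qed
  moreover have "B\<langle>x := N1\<rangle> \<sim>\<^sub>\<alpha> A'"
    using \<open>B\<langle>x := N\<rangle> \<sim>\<^sub>\<alpha> B\<langle>x := N1\<rangle>\<close> ty_app.prems(3) alpha_sym alpha_trans by blast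
  moreover have "\<Delta> \<turnstile> A' : Cst s"
    using ty_app.IH(6)[OF ty_app.prems(1) ty_app.prems(3) alpha_refl] .
  ultimately show ?case
    unfolding M' by (rule ty_conv_alpha)
next
  case (ty_conv \<Gamma> M A B s)
  have "\<Delta> \<turnstile> M' : A"
    using ty_conv.IH(2)[OF ty_conv.prems(1,2) alpha_refl] .
  moreover have "bconv chi enc dec A A'"
    using ty_conv.IH(3) bconv_alpha[OF ty_conv.prems(3)] by (rule bconv_trans)
  moreover have "\<Delta> \<turnstile> A' : Cst s"
    using ty_conv.IH(5)[OF ty_conv.prems(1,3) alpha_refl] .
  ultimately show ?case
    by (rule ctx_ok_typing.ty_conv)
qed

end

theorem mainTheorem15:
  fixes chi :: "nat list \<Rightarrow> nat" and enc :: "'v \<Rightarrow> nat" and dec :: "nat \<Rightarrow> 'v"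
    and Ax :: "'c \<Rightarrow> 'c \<Rightarrow> bool" and Rl :: "'c \<Rightarrow> 'c \<Rightarrow> 'c \<Rightarrow> bool"
    and \<Gamma> \<Delta> :: "('c, 'v) ctx" and M A B :: "('c, 'v) trm"
  assumes enc_dec: "\<forall>n. enc (dec n) = n"
    and chi_fresh: "\<forall>ns. chi ns \<notin> set ns"
    and "ctx_alpha chi enc dec \<Gamma> \<Delta>"
    and "alpha chi enc dec A B"
    and "typing chi enc dec Ax Rl \<Gamma> M A"
  shows "typing chi enc dec Ax Rl \<Delta> M B"
proof -
  interpret pts chi enc dec Ax Rl
    using enc_dec chi_fresh by unfold_locales
  show ?thesis
    using alpha_invariance(2)[OF assms(5,3) alpha_refl assms(4)] .
qed

end
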